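(* Let $S\subseteq\{0,1\}^n$, $1\le m\le n$, $f\in[0,1/2]$, $\Delta\in(0,1)$. Suppose $T\ge 24\ln\frac1\Delta$ hash functions $h_1,\dots,h_T$ are drawn independently from $\mathcal{H}^f_{m\times n}$. Let $$U(n,m,f)=\min\left\{z\ \middle|\ \frac{1}{1+2^{2m}v(z)/z^2}\ge\frac34\right\}.$$ Let $\mathcal{A}(S,h_1,\dots,h_T)$ be the random variable equal to $U(n,m,f)$ if $\mathrm{Median}(\mathbb{I}[S(h_1)=0],\dots,\mathbb{I}[S(h_T)=0])=1$, and equal to $2^n$ otherwise. Then $\Pr\left[|S|\le\mathcal{A}(S,h_1,\dots,h_T)\right]\ge1-\Delta$.
   Context: Drawing $h$ from $\mathcal{H}^f_{m\times n}$ means $h(x)=Ax+b\bmod 2$ with $A\in\{0,1\}^{m\times n}$ having i.i.d. entries with $\Pr[A_{ij}=1]=f$ and $b\in\{0,1\}^m$ uniform and independent of $A$; $S(h)=|\{x\in S:h(x)=0\}|$. In the definition of $U$, $z$ ranges over integers $1\le z\le 2^n$ (minimum of the empty set $=+\infty$). For integer $1\le q\le 2^n+1$: $w^*(n,q)=\max\{w\ge0:\sum_{j=1}^w\binom{n}{j}\le q-1\}$, $r(n,q)=q-1-\sum_{w=1}^{w^*(n,q)}\binom{n}{w}$, $$(q-1)\,\epsilon(n,m,q,f)=\sum_{w=1}^{w^*(n,q)}\binom{n}{w}\frac{(1+(1-2f)^w)^m}{2^m}+\frac{r(n,q)}{2^m}(1+(1-2f)^{w^*(n,q)+1})^m,$$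 and $v(q)=\frac{q}{2^m}\left(1+\epsilon(n,m,q,f)(q-1)-\frac{q}{2^m}\right)$. *)

theory Defs
  imports "HOL-Probability.Probability"
begin

text \<open>A hash function h(x) = A x + b mod 2, A an m x n 0/1 matrix (as a function on index
pairs, entries outside the m x n range are False), b a 0/1 vector of length m.
Vectors x in {0,1}^n are boolean lists of length n.\<close>

type_synonym hash = "((nat \<times> nat) \<Rightarrow> bool) \<times> (nat \<Rightarrow> bool)"

definition hash_pmf :: "nat \<Rightarrow> nat \<Rightarrow> real \<Rightarrow> hash pmf" where
  "hash_pmf m n f =
     do { A \<leftarrow> Pi_pmf ({..<m} \<times> {..<n}) False (\<lambda>_. bernoulli_pmf f);
          b \<leftarrow> Pi_pmf {..<m} False (\<lambda>_. bernoulli_pmf (1/2));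
          return_pmf (A, b) }"

text \<open>i-th coordinate of h(x) = A x + b mod 2 (True = 1).\<close>
definition hash_coord :: "nat \<Rightarrow> hash \<Rightarrow> bool list \<Rightarrow> nat \<Rightarrow> bool" where
  "hash_coord n h x i = (snd h i \<noteq> odd (card {j. j < n \<and> fst h (i, j) \<and> x ! j}))"

definition cell_count :: "nat \<Rightarrow> nat \<Rightarrow> bool list set \<Rightarrow> hash \<Rightarrow> nat" where
  "cell_count m n S h = card {x \<in> S. \<forall>i<m. \<not> hash_coord n h x i}"

definition wstar :: "nat \<Rightarrow> nat \<Rightarrow> nat" where
  "wstar n q = (GREATEST w. w \<le> n \<and> (\<Sum>j=1..w. n choose j) \<le> q - 1)"

definition rr :: "nat \<Rightarrow> nat \<Rightarrow> nat" where
  "rr n q = q - 1 - (\<Sum>w=1..wstar n q. n choose w)"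

definition eps :: "nat \<Rightarrow> nat \<Rightarrow> nat \<Rightarrow> real \<Rightarrow> real" where
  "eps n m q f =
     ((\<Sum>w=1..wstar n q. real (n choose w) * (1 + (1 - 2*f)^w)^m / 2^m)
      + real (rr n q) / 2^m * (1 + (1 - 2*f)^(wstar n q + 1))^m) / (real q - 1)"

definition vq :: "nat \<Rightarrow> nat \<Rightarrow> real \<Rightarrow> nat \<Rightarrow> real" where
  "vq n m f q = real q / 2^m * (1 + eps n m q f * (real q - 1) - real q / 2^m)"

definition U_set :: "nat \<Rightarrow> nat \<Rightarrow> real \<Rightarrow> nat set" where
  "U_set n m f = {z. 1 \<le> z \<and> z \<le> 2^n \<and>
       1 / (1 + 2^(2*m) * vq n m f z / (real z)^2) \<ge> 3/4}"

definition U :: "nat \<Rightarrow> nat \<Rightarrow> real \<Rightarrow> enat" where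
  "U n m f = (if U_set n m f = {} then \<infinity> else enat (Min (U_set n m f)))"

text \<open>Median of the 0/1 values I[S(h_t)=0], t < T, equals 1 iff strictly more than half are 1.\<close>
definition median_is_one :: "nat \<Rightarrow> (nat \<Rightarrow> bool) \<Rightarrow> bool" where
  "median_is_one T P = (2 * card {t. t < T \<and> P t} > T)"

definition alg :: "nat \<Rightarrow> nat \<Rightarrow> real \<Rightarrow> nat \<Rightarrow> bool list set \<Rightarrow> (nat \<Rightarrow> hash) \<Rightarrow> enat" where
  "alg n m f T S hs =
     (if median_is_one T (\<lambda>t. cell_count m n S (hs t) = 0) then U n m f else enat (2^n))"

end

theory Submission
  imports Defs
begin

text \<open>For a set \<open>S'\<close> of \<open>q\<close> words, the number \<open>S'(h)\<close> of words hashed to \<open>0\<close> has mean \<open>q / 2^m\<close>.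
  Since \<open>Pr[h(x) = h(y) = 0] = 2^-m ((1 + (1 - 2f)^d) / 2)^m\<close> depends only on the Hamming
  distance \<open>d\<close> of \<open>x\<close> and \<open>y\<close> and decreases in \<open>d\<close>, the second moment of \<open>S'(h)\<close> is at most
  \<open>q / 2^m (1 + \<epsilon> (q - 1))\<close>, the worst case being that the other words crowd into the smallest
  Hamming spheres around each word. The second moment method then gives
  \<open>Pr[S'(h) \<noteq> 0] \<ge> (q / 2^m) / (1 + \<epsilon> (q - 1))\<close>, which is at least \<open>3/4\<close> for \<open>q = U\<close> by the
  choice of \<open>U\<close>. Hence if \<open>|S| > U\<close>, comparing \<open>S\<close> with a \<open>U\<close>-element subset gives
  \<open>Pr[S(h) = 0] \<le> 1/4\<close>, and by Hoeffding's inequality the median of \<open>T \<ge> 24 ln (1/\<Delta>)\<close>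
  independent trials is wrong with probability at most \<open>exp (-T/8) \<le> \<Delta>\<close>. If \<open>|S| \<le> U\<close> the
  output is never below \<open>|S|\<close>.\<close>

lemma expectation_bind_pmf_bounded:
  fixes F :: "'b \<Rightarrow> real"
  assumes "\<And>z. \<bar>F z\<bar> \<le> B"
  shows "measure_pmf.expectation (bind_pmf P N) F
       = measure_pmf.expectation P (\<lambda>a. measure_pmf.expectation (N a) F)"
  unfolding measure_pmf_bind
  by (rule integral_bind[where B=B and B'=1 and K="count_space UNIV"])
     (auto simp: assms measure_pmf.emeasure_space_1 space_subprob_algebra subprob_space_measure_pmf
           intro!: measurable_pmf_measure1 prob_space.finite_measure measure_pmf.prob_space_axioms)

lemma expectation_prod_Pi_pmf_bounded:
  fixes g :: "'a \<Rightarrow> 'b \<Rightarrow> real"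
  assumes fin: "finite K" and bounded: "\<And>k v. \<bar>g k v\<bar> \<le> c"
  shows "measure_pmf.expectation (Pi_pmf K d p) (\<lambda>y. \<Prod>k\<in>K. g k (y k))
       = (\<Prod>k\<in>K. measure_pmf.expectation (p k) (g k))"
proof -
  have int: "integrable (measure_pmf q) (\<lambda>y. g k (y k))" for q :: "('a \<Rightarrow> 'b) pmf" and k
    by (rule measure_pmf.integrable_const_bound[where B=c]) (auto simp: bounded)
  have "prob_space.indep_vars (measure_pmf (Pi_pmf K d p)) (\<lambda>_. borel) (\<lambda>k y. g k (y k)) K"
    using prob_space.indep_vars_compose2[OF measure_pmf.prob_space_axioms indep_vars_Pi_pmf[OF fin],
        of g "\<lambda>_. borel"] by simp
  then have "measure_pmf.expectation (Pi_pmf K d p) (\<lambda>y. \<Prod>k\<in>K. g k (y k))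
      = (\<Prod>k\<in>K. measure_pmf.expectation (Pi_pmf K d p) (\<lambda>y. g k (y k)))"
    by (intro prob_space.indep_vars_lebesgue_integral[OF measure_pmf.prob_space_axioms fin] int)
  also have "\<dots> = (\<Prod>k\<in>K. measure_pmf.expectation (p k) (g k))"
  proof (intro prod.cong refl)
    fix k assume "k \<in> K"
    then have "map_pmf (\<lambda>y. y k) (Pi_pmf K d p) = p k" by (simp add: Pi_pmf_component fin)
    then show "measure_pmf.expectation (Pi_pmf K d p) (\<lambda>y. g k (y k)) = measure_pmf.expectation (p k) (g k)"
      by (metis integral_map_pmf)
  qed
  finally show ?thesis .
qed

lemma expectation_of_bool:
  "measure_pmf.expectation P (\<lambda>z. of_bool (Q z) :: real) = measure_pmf.prob P {z. Q z}"
proof -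
  have "(\<lambda>z. of_bool (Q z) :: real) = indicator {z. Q z}" by (auto simp: indicator_def)
  then show ?thesis by simp
qed

lemma sq_le_of_quadratic_nonneg:
  fixes a b p :: real
  assumes "p \<ge> 0" and nonneg: "\<And>t. 0 \<le> a - 2*t*b + t^2*p"
  shows "b^2 \<le> a*p"
proof (cases "p = 0")
  case True
  have "b = 0"
  proof (rule ccontr)
    assume b: "b \<noteq> 0"
    have "0 \<le> a - 2*((\<bar>a\<bar>+1)/b)*b + ((\<bar>a\<bar>+1)/b)^2*p" by (rule nonneg)
    also have "\<dots> = a - 2*(\<bar>a\<bar>+1)" using b True by simp
    finally show False by (cases "a \<ge> 0") auto
  qed
  then show ?thesis using True by simp
next
  case False
  then have p: "p > 0" using \<open>p \<ge> 0\<close> by simp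
  have "0 \<le> a - 2*(b/p)*b + (b/p)^2*p" by (rule nonneg)
  also have "\<dots> = a - b^2/p" using p by (simp add: power2_eq_square field_simps)
  finally show ?thesis using p by (simp add: pos_divide_le_eq)
qed

text \<open>The second moment method: apply the previous lemma to the nonnegative quadratic
  \<open>t \<mapsto> E (X - t \<one>[X \<noteq> 0])\<^sup>2\<close>.\<close>

lemma expectation_sq_le_prob_nonzero:
  fixes X :: "'a \<Rightarrow> real"
  assumes bounded: "\<And>z. \<bar>X z\<bar> \<le> B"
  shows "(measure_pmf.expectation P X)^2
         \<le> measure_pmf.expectation P (\<lambda>z. X z ^ 2) * measure_pmf.prob P {z. X z \<noteq> 0}"
proof -
  define Y where "Y z = (of_bool (X z \<noteq> 0) :: real)" for z
  have int_X: "integrable (measure_pmf P) X"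
    by (rule measure_pmf.integrable_const_bound[where B=B]) (auto simp: bounded)
  have int_X2: "integrable (measure_pmf P) (\<lambda>z. X z ^ 2)"
  proof (rule measure_pmf.integrable_const_bound[where B="B^2"])
    show "AE z in measure_pmf P. norm (X z ^ 2) \<le> B^2" for z
      using power_mono[OF bounded abs_ge_zero, of _ 2] by simp
  qed simp
  have int_Y: "integrable (measure_pmf P) Y"
    by (rule measure_pmf.integrable_const_bound[where B=1]) (auto simp: Y_def)
  have E_Y: "measure_pmf.expectation P Y = measure_pmf.prob P {z. X z \<noteq> 0}"
    unfolding Y_def by (rule expectation_of_bool)
  have "0 \<le> measure_pmf.expectation P (\<lambda>z. X z ^ 2) - 2*t*measure_pmf.expectation P X
            + t^2*measure_pmf.expectation P Y" for t
  proof -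
    have square: "(X z - t * Y z)^2 = X z ^ 2 - 2*t*X z + t^2 * Y z" for z
      by (cases "X z = 0") (simp_all add: Y_def power2_eq_square algebra_simps)
    have "0 \<le> measure_pmf.expectation P (\<lambda>z. (X z - t * Y z)^2)"
      by (intro Bochner_Integration.integral_nonneg) simp
    also have "\<dots> = measure_pmf.expectation P (\<lambda>z. X z ^ 2) - 2*t*measure_pmf.expectation P X
                    + t^2*measure_pmf.expectation P Y"
      unfolding square using int_X int_X2 int_Y by simp
    finally show ?thesis .
  qed
  then show ?thesis unfolding E_Y[symmetric]
    by (intro sq_le_of_quadratic_nonneg) (auto simp: Y_def)
qed

text \<open>Median amplification: if each trial succeeds with probability at most 1/4, then by
  Hoeffding more than half of \<open>T\<close> independent trials succeed with probability at most
  \<open>exp (-T/8) \<le> \<Delta>\<close>.\<close>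

lemma prob_median_is_one_le:
  fixes H :: "'a pmf" and Q :: "'a \<Rightarrow> bool"
  assumes p: "measure_pmf.prob H {h. Q h} \<le> 1/4" and \<Delta>: "0 < \<Delta>" "\<Delta> < 1"
    and T: "real T \<ge> 24 * ln (1/\<Delta>)"
  shows "measure_pmf.prob (Pi_pmf {..<T} d (\<lambda>_. H)) {hs. median_is_one T (\<lambda>t. Q (hs t))} \<le> \<Delta>"
proof -
  define P where "P = Pi_pmf {..<T} d (\<lambda>_. H)"
  define X where "X = (\<lambda>t (hs :: nat \<Rightarrow> 'a). of_bool (Q (hs t)) :: real)"
  define \<mu> where "\<mu> = (\<Sum>t\<in>{..<T}. measure_pmf.expectation P (X t))"
  have "ln (1/\<Delta>) > 0" using \<Delta> by simp
  then have T_pos: "real T > 0" using T by linarith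
  have "measure_pmf.expectation P (X t) = measure_pmf.prob H {h. Q h}" if "t < T" for t
  proof -
    have "measure_pmf.expectation P (X t) = measure_pmf.expectation (map_pmf (\<lambda>hs. hs t) P) (\<lambda>h. of_bool (Q h))"
      by (simp add: X_def)
    also have "map_pmf (\<lambda>hs. hs t) P = H" using that by (simp add: P_def Pi_pmf_component)
    finally show ?thesis by (simp add: expectation_of_bool)
  qed
  then have "\<mu> = real T * measure_pmf.prob H {h. Q h}" by (simp add: \<mu>_def)
  then have \<mu>: "\<mu> \<le> real T / 4" using p T_pos by simp
  interpret Hoeffding_ineq "measure_pmf P" "{..<T}" X "\<lambda>_. 0" "\<lambda>_. 1" \<mu>
  proof unfold_locales
    show "prob_space.indep_vars (measure_pmf P) (\<lambda>_. borel) X {..<T}"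
      using prob_space.indep_vars_compose2[OF measure_pmf.prob_space_axioms
          indep_vars_Pi_pmf[of "{..<T}" d "\<lambda>_. H"], of "\<lambda>_ h. of_bool (Q h) :: real" "\<lambda>_. borel"]
      by (simp add: X_def P_def)
  qed (auto simp: \<mu>_def X_def)
  have "{hs. median_is_one T (\<lambda>t. Q (hs t))} \<subseteq> {hs \<in> space (measure_pmf P). (\<Sum>t<T. X t hs) \<ge> \<mu> + T/4}"
  proof safe
    fix hs assume "median_is_one T (\<lambda>t. Q (hs t))"
    then have "real (card {t. t < T \<and> Q (hs t)}) > T/2" by (simp add: median_is_one_def)
    moreover have "(\<Sum>t<T. X t hs) = real (card {t. t < T \<and> Q (hs t)})"
      by (simp add: X_def Int_def)
    ultimately show "(\<Sum>t<T. X t hs) \<ge> \<mu> + T/4" using \<mu> by linarith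
  qed simp
  then have "measure_pmf.prob P {hs. median_is_one T (\<lambda>t. Q (hs t))}
      \<le> measure_pmf.prob P {hs \<in> space (measure_pmf P). (\<Sum>t<T. X t hs) \<ge> \<mu> + T/4}"
    by (rule measure_pmf.finite_measure_mono) simp
  also have "\<dots> \<le> exp (-2 * (T/4)\<^sup>2 / (\<Sum>t<T. (1 - 0)\<^sup>2))"
    using Hoeffding_ineq_ge[of "T/4"] T_pos by simp
  also have "\<dots> = exp (- (T/8))"
    using T_pos by (simp add: power2_eq_square)
  also have "\<dots> \<le> exp (ln \<Delta>)"
  proof -
    have "ln \<Delta> < 0" and "- (24 * ln \<Delta>) \<le> T" using T \<Delta> by (simp_all add: ln_div)
    then show ?thesis by simp
  qed
  also have "\<dots> = \<Delta>" using \<Delta> by simp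
  finally show ?thesis unfolding P_def .
qed

section \<open>Random parity checks\<close>

definition bool_sign :: "bool \<Rightarrow> real" where
  "bool_sign v = (if v then -1 else 1)"

lemma abs_bool_sign [simp]: "\<bar>bool_sign v\<bar> = 1"
  by (simp add: bool_sign_def)

lemma neg_one_power_card_filter:
  assumes "finite J"
  shows "(-1::real) ^ card {j\<in>J. P j} = (\<Prod>j\<in>J. bool_sign (P j))"
proof -
  have "(\<Prod>j\<in>J. bool_sign (P j)) = (\<Prod>j\<in>J \<inter> {j. P j}. -1) * (\<Prod>j\<in>J \<inter> - {j. P j}. 1)"
    unfolding bool_sign_def by (rule prod.If_cases) fact
  also have "J \<inter> {j. P j} = {j\<in>J. P j}" by auto
  finally show ?thesis by simp
qed

lemma expectation_prod_bool_sign: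
  assumes "finite K" "J \<subseteq> K" "0 \<le> f" "f \<le> 1"
  shows "measure_pmf.expectation (Pi_pmf K d (\<lambda>_. bernoulli_pmf f)) (\<lambda>A. \<Prod>k\<in>J. bool_sign (A k))
       = (1 - 2*f) ^ card J"
proof -
  have restrict: "(\<Prod>k\<in>J. g k) = (\<Prod>k\<in>K. if k \<in> J then g k else 1)" for g :: "_ \<Rightarrow> real"
    using assms(1,2) by (simp add: prod.If_cases Int_absorb1)
  have "measure_pmf.expectation (Pi_pmf K d (\<lambda>_. bernoulli_pmf f)) (\<lambda>A. \<Prod>k\<in>J. bool_sign (A k))
      = (\<Prod>k\<in>K. measure_pmf.expectation (bernoulli_pmf f) (\<lambda>v. if k \<in> J then bool_sign v else 1))"
    unfolding restrict by (rule expectation_prod_Pi_pmf_bounded[where c=1]) (simp_all add: assms(1))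
  also have "\<dots> = (\<Prod>k\<in>K. if k \<in> J then 1 - 2*f else 1)"
    using assms(3,4) by (intro prod.cong refl) (simp add: bool_sign_def)
  finally show ?thesis by (simp flip: restrict)
qed

text \<open>Expanding the product over rows, each monomial is a product of independent signs.\<close>

lemma expectation_prod_rows:
  assumes N: "finite N" "D \<subseteq> N" and f: "0 \<le> f" "f \<le> 1"
  shows "measure_pmf.expectation (Pi_pmf ({..<m} \<times> N) d (\<lambda>_. bernoulli_pmf f))
           (\<lambda>A. \<Prod>i<m. (1 + (\<Prod>j\<in>D. bool_sign (A (i,j)))) / 2)
       = ((1 + (1 - 2*f) ^ card D) / 2) ^ m"
proof -
  define c where "c = (1 - 2*f) ^ card D"
  have expand: "(\<Prod>i<m. (1 + (\<Prod>j\<in>D. bool_sign (A (i,j)))) / 2)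
      = (\<Sum>I\<in>Pow {..<m}. \<Prod>k\<in>I \<times> D. bool_sign (A k)) / 2^m" for A
  proof -
    have "(\<Prod>i<m. (1 + (\<Prod>j\<in>D. bool_sign (A (i,j)))) / 2)
        = (\<Prod>i<m. (\<Prod>j\<in>D. bool_sign (A (i,j))) + 1) / 2^m"
      unfolding prod_dividef by (simp add: add.commute)
    also have "(\<Prod>i<m. (\<Prod>j\<in>D. bool_sign (A (i,j))) + 1)
        = (\<Sum>I\<in>Pow {..<m}. (\<Prod>i\<in>I. \<Prod>j\<in>D. bool_sign (A (i,j))) * (\<Prod>i\<in>{..<m}-I. 1))"
      by (rule prod_add) simp
    also have "\<dots> = (\<Sum>I\<in>Pow {..<m}. \<Prod>k\<in>I \<times> D. bool_sign (A k))"
      by (simp add: prod.cartesian_product case_prod_beta)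
    finally show ?thesis .
  qed
  have monomial: "measure_pmf.expectation (Pi_pmf ({..<m} \<times> N) d (\<lambda>_. bernoulli_pmf f))
      (\<lambda>A. \<Prod>k\<in>I \<times> D. bool_sign (A k)) = c ^ card I" if "I \<subseteq> {..<m}" for I
  proof -
    have sub: "I \<times> D \<subseteq> {..<m} \<times> N" using that N(2) by auto
    have "measure_pmf.expectation (Pi_pmf ({..<m} \<times> N) d (\<lambda>_. bernoulli_pmf f))
        (\<lambda>A. \<Prod>k\<in>I \<times> D. bool_sign (A k)) = (1 - 2*f) ^ card (I \<times> D)"
      by (rule expectation_prod_bool_sign[OF finite_cartesian_product[OF finite_lessThan N(1)] sub f])
    then show ?thesis
      by (simp add: c_def card_cartesian_product mult.commute[of "card I"] power_mult)
  qed
  have "measure_pmf.expectation (Pi_pmf ({..<m} \<times> N) d (\<lambda>_. bernoulli_pmf f))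
           (\<lambda>A. \<Prod>i<m. (1 + (\<Prod>j\<in>D. bool_sign (A (i,j)))) / 2)
      = (\<Sum>I\<in>Pow {..<m}. measure_pmf.expectation (Pi_pmf ({..<m} \<times> N) d (\<lambda>_. bernoulli_pmf f))
           (\<lambda>A. \<Prod>k\<in>I \<times> D. bool_sign (A k))) / 2^m"
    unfolding expand integral_divide_zero
    by (subst Bochner_Integration.integral_sum)
       (auto intro!: measure_pmf.integrable_const_bound[where B=1] simp: abs_prod)
  also have "\<dots> = (\<Sum>I\<in>Pow {..<m}. c ^ card I) / 2^m"
    by (simp add: monomial)
  also have "(\<Sum>I\<in>Pow {..<m}. c ^ card I) = (c + 1) ^ m"
    using prod_add[of "{..<m}" "\<lambda>_. c" "\<lambda>_. 1"] by simp
  finally show ?thesis by (simp add: c_def power_divide add.commute[of 1])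
qed

section \<open>Collisions of two words under a random hash\<close>

lemma finite_bool_lists_length: "finite {x :: bool list. length x = n}"
  using finite_lists_length_eq[of "UNIV :: bool set" n] by simp

lemma card_bool_lists_length: "card {x :: bool list. length x = n} = 2^n"
  using card_lists_length_eq[of "UNIV :: bool set" n] by simp

definition diff_positions :: "nat \<Rightarrow> bool list \<Rightarrow> bool list \<Rightarrow> nat set" where
  "diff_positions n x y = {j. j < n \<and> x ! j \<noteq> y ! j}"

definition hamming_dist :: "nat \<Rightarrow> bool list \<Rightarrow> bool list \<Rightarrow> nat" where
  "hamming_dist n x y = card (diff_positions n x y)"

text \<open>The \<open>i\<close>-th coordinate of \<open>A x mod 2\<close>, so that \<open>hash_coord n (A, b) x i = (b i \<noteq> row_parity n A x i)\<close>.\<close>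

definition row_parity :: "nat \<Rightarrow> ((nat \<times> nat) \<Rightarrow> bool) \<Rightarrow> bool list \<Rightarrow> nat \<Rightarrow> bool" where
  "row_parity n A x i = odd (card {j. j < n \<and> A (i, j) \<and> x ! j})"

definition hashes_to_zero :: "nat \<Rightarrow> nat \<Rightarrow> bool list \<Rightarrow> hash \<Rightarrow> real" where
  "hashes_to_zero m n x h = of_bool (\<forall>i<m. \<not> hash_coord n h x i)"

lemma of_bool_row_parity_eq:
  "(of_bool (row_parity n A x i = row_parity n A y i) :: real)
     = (1 + (\<Prod>j\<in>diff_positions n x y. bool_sign (A (i, j)))) / 2"
proof -
  have parity: "(of_bool (odd a = odd b) :: real) = (1 + (-1)^a * (-1)^b) / 2" for a b :: nat
    by (cases "even a"; cases "even b") simp_all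
  have sign: "bool_sign (a \<and> p) * bool_sign (a \<and> q) = (if p \<noteq> q then bool_sign a else 1)" for a p q
    by (simp add: bool_sign_def)
  have "(-1::real) ^ card {j. j < n \<and> A (i, j) \<and> x ! j} * (-1) ^ card {j. j < n \<and> A (i, j) \<and> y ! j}
      = (\<Prod>j<n. bool_sign (A (i, j) \<and> x ! j)) * (\<Prod>j<n. bool_sign (A (i, j) \<and> y ! j))"
    using neg_one_power_card_filter[of "{..<n}"] by (simp add: lessThan_def)
  also have "\<dots> = (\<Prod>j<n. if x ! j \<noteq> y ! j then bool_sign (A (i, j)) else 1)"
    by (simp add: sign flip: prod.distrib)
  also have "\<dots> = (\<Prod>j\<in>diff_positions n x y. bool_sign (A (i, j)))"
    by (simp add: diff_positions_def prod.inter_filter[symmetric] lessThan_def)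
  finally have signs: "(-1::real) ^ card {j. j < n \<and> A (i, j) \<and> x ! j}
      * (-1) ^ card {j. j < n \<and> A (i, j) \<and> y ! j} = (\<Prod>j\<in>diff_positions n x y. bool_sign (A (i, j)))" .
  show ?thesis unfolding row_parity_def parity signs ..
qed

lemma hashes_to_zero_eq_prod:
  "hashes_to_zero m n x (A, b) = (\<Prod>i<m. of_bool (b i = row_parity n A x i))"
proof -
  have "(\<forall>i<m. \<not> hash_coord n (A, b) x i) = (\<forall>i\<in>{..<m}. b i = row_parity n A x i)"
    by (auto simp: hash_coord_def row_parity_def)
  moreover have "(of_bool (\<forall>i\<in>I. P i) :: real) = (\<Prod>i\<in>I. of_bool (P i))" if "finite I" for I P
    using that by (induction I rule: finite_induct) auto
  ultimately show ?thesis unfolding hashes_to_zero_def by simp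
qed

lemma expectation_uniform_bits_agree:
  fixes m :: nat
  shows "measure_pmf.expectation (Pi_pmf {..<m} d (\<lambda>_. bernoulli_pmf (1/2)))
       (\<lambda>b. \<Prod>i<m. of_bool (b i = u i) * of_bool (b i = v i))
     = (\<Prod>i<m. (of_bool (u i = v i) :: real) / 2)"
  by (subst expectation_prod_Pi_pmf_bounded[where c=1]) (auto intro!: prod.cong)

lemma expectation_hashes_to_zero_pair:
  assumes f: "0 \<le> f" "f \<le> 1"
  shows "measure_pmf.expectation (hash_pmf m n f) (\<lambda>h. hashes_to_zero m n x h * hashes_to_zero m n y h)
       = (1/2)^m * ((1 + (1 - 2*f) ^ hamming_dist n x y) / 2)^m"
proof -
  let ?A = "Pi_pmf ({..<m} \<times> {..<n}) False (\<lambda>_. bernoulli_pmf f)"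
  let ?b = "Pi_pmf {..<m} False (\<lambda>_. bernoulli_pmf (1/2))"
  have bounded: "\<bar>hashes_to_zero m n x h * hashes_to_zero m n y h\<bar> \<le> 1" for h
    by (simp add: hashes_to_zero_def)
  have "measure_pmf.expectation (hash_pmf m n f) (\<lambda>h. hashes_to_zero m n x h * hashes_to_zero m n y h)
      = measure_pmf.expectation ?A (\<lambda>A. measure_pmf.expectation ?b
          (\<lambda>b. \<Prod>i<m. of_bool (b i = row_parity n A x i) * of_bool (b i = row_parity n A y i)))"
    unfolding hash_pmf_def
    by (simp add: expectation_bind_pmf_bounded[OF bounded] hashes_to_zero_eq_prod prod.distrib)
  also have "\<dots> = measure_pmf.expectation ?A
      (\<lambda>A. (1/2)^m * (\<Prod>i<m. (1 + (\<Prod>j\<in>diff_positions n x y. bool_sign (A (i, j)))) / 2))"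
    by (simp add: expectation_uniform_bits_agree of_bool_row_parity_eq prod_dividef power_one_over
        flip: power_mult_distrib)
  also have "\<dots> = (1/2)^m * ((1 + (1 - 2*f) ^ hamming_dist n x y) / 2)^m"
    by (simp add: expectation_prod_rows[OF _ _ f] diff_positions_def hamming_dist_def subset_eq)
  finally show ?thesis .
qed

section \<open>Hamming spheres\<close>

lemma hamming_dist_le: "hamming_dist n x y \<le> n"
proof -
  have "diff_positions n x y \<subseteq> {..<n}" by (auto simp: diff_positions_def)
  then show ?thesis unfolding hamming_dist_def using card_mono[of "{..<n}"] by fastforce
qed

lemma hamming_dist_pos:
  assumes "length x = n" "length y = n" "x \<noteq> y"
  shows "1 \<le> hamming_dist n x y"
proof -
  obtain j where "j < n" "x ! j \<noteq> y ! j"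
    using assms nth_equalityI[of x y] by auto
  then have "diff_positions n x y \<noteq> {}" by (auto simp: diff_positions_def)
  then show ?thesis by (simp add: hamming_dist_def diff_positions_def Suc_le_eq card_gt_0_iff)
qed

text \<open>A word of length \<open>n\<close> is determined by the set of positions where it differs from \<open>x\<close>.\<close>

lemma card_hamming_sphere_le:
  assumes "Y \<subseteq> {y. length y = n}"
  shows "card {y\<in>Y. hamming_dist n x y = w} \<le> n choose w"
proof -
  have "inj_on (diff_positions n x) Y"
  proof (rule inj_onI)
    fix y z assume yz: "y \<in> Y" "z \<in> Y" "diff_positions n x y = diff_positions n x z"
    show "y = z"
    proof (rule nth_equalityI)
      show "length y = length z" using yz assms by auto
      fix j assume "j < length y"
      then have "j < n" using yz assms by auto
      moreover have "(j \<in> diff_positions n x y) = (j \<in> diff_positions n x z)" using yz(3) by simp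
      ultimately show "y ! j = z ! j" by (auto simp: diff_positions_def)
    qed
  qed
  then have "inj_on (diff_positions n x) {y\<in>Y. hamming_dist n x y = w}"
    by (rule inj_on_subset) auto
  then have "card {y\<in>Y. hamming_dist n x y = w} = card (diff_positions n x ` {y\<in>Y. hamming_dist n x y = w})"
    by (rule card_image[symmetric])
  also have "\<dots> \<le> card {B. B \<subseteq> {..<n} \<and> card B = w}"
  proof (rule card_mono)
    show "finite {B. B \<subseteq> {..<n} \<and> card B = w}" by (rule finite_subset[of _ "Pow {..<n}"]) auto
  qed (auto simp: hamming_dist_def diff_positions_def)
  also have "\<dots> = n choose w" by (simp add: n_subsets)
  finally show ?thesis .
qed

text \<open>If counts \<open>c w\<close> are dominated by capacities \<open>a w\<close> and the weights \<open>G\<close> decrease, the weighted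
  sum is largest when the capacities of the smallest \<open>w\<close> are filled first.\<close>

lemma weighted_sum_le_greedy:
  fixes a c G :: "nat \<Rightarrow> real"
  assumes k: "k \<le> n" and ca: "\<And>w. c w \<le> a w" and G: "\<And>v w. v \<le> w \<Longrightarrow> G w \<le> G v"
    and c0: "\<And>w. 0 \<le> c w"
  shows "(\<Sum>w=1..n. c w * G w)
         \<le> (\<Sum>w=1..k. a w * G w) + ((\<Sum>w=1..n. c w) - (\<Sum>w=1..k. a w)) * G (k+1)"
proof -
  have split: "(\<Sum>w=1..n. h w) = (\<Sum>w=1..k. h w) + (\<Sum>w=k+1..n. h w)" for h :: "nat \<Rightarrow> real"
  proof -
    have "{1..n} = {1..k} \<union> {k+1..n}" using k by auto
    then show ?thesis by (simp add: sum.union_disjoint)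
  qed
  have tail: "(\<Sum>w=k+1..n. c w * G w) \<le> (\<Sum>w=k+1..n. c w) * G (k+1)"
    unfolding sum_distrib_right by (intro sum_mono mult_left_mono G c0) auto
  have "0 \<le> (\<Sum>w=1..k. (a w - c w) * (G w - G (k+1)))"
    by (intro sum_nonneg mult_nonneg_nonneg) (auto simp: ca G)
  also have "\<dots> = ((\<Sum>w=1..k. a w * G w) - (\<Sum>w=1..k. a w) * G (k+1))
                 - ((\<Sum>w=1..k. c w * G w) - (\<Sum>w=1..k. c w) * G (k+1))"
  proof -
    have "(a w - c w) * (G w - G (k+1))
        = (a w * G w - c w * G w) - (a w * G (k+1) - c w * G (k+1))" for w
      by (simp add: algebra_simps)
    then show ?thesis by (simp only: sum_subtractf sum_distrib_right[symmetric])
  qed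
  finally show ?thesis using split[of c] split[of "\<lambda>w. c w * G w"] tail
    by (simp add: algebra_simps)
qed

section \<open>The second moment bound\<close>

lemma wstar_le: "wstar n q \<le> n" "(\<Sum>j=1..wstar n q. n choose j) \<le> q - 1"
proof -
  have "wstar n q \<le> n \<and> (\<Sum>j=1..wstar n q. n choose j) \<le> q - 1"
    unfolding wstar_def by (rule GreatestI_nat[where k=0 and b=n]) auto
  then show "wstar n q \<le> n" "(\<Sum>j=1..wstar n q. n choose j) \<le> q - 1" by simp_all
qed

text \<open>The definition of \<open>eps\<close> divides by \<open>q - 1\<close>; it is only ever used multiplied back by \<open>q - 1\<close>.\<close>

lemma eps_times_eq:
  assumes "q \<noteq> 1"
  shows "eps n m q f * (real q - 1)
       = (\<Sum>w=1..wstar n q. real (n choose w) * (1 + (1 - 2*f)^w)^m / 2^m)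
         + real (rr n q) / 2^m * (1 + (1 - 2*f)^(wstar n q + 1))^m"
  using assms by (simp add: eps_def)

lemma eps_times_nonneg:
  assumes "0 \<le> f" "f \<le> 1/2"
  shows "0 \<le> eps n m q f * (real q - 1)"
proof (cases "q = 1")
  case False
  have "0 \<le> 1 + (1 - 2*f)^w" for w using assms by simp
  then show ?thesis unfolding eps_times_eq[OF False]
    by (intro add_nonneg_nonneg sum_nonneg mult_nonneg_nonneg divide_nonneg_nonneg zero_le_power)
       (use assms in auto)
qed simp

text \<open>The sum \<open>\<Sum>\<^sub>y Pr[h(y) = 0 | h(x) = 0]\<close> over a set of \<open>q\<close> words is at most \<open>1 + \<epsilon> (q - 1)\<close>:
  the \<open>q - 1\<close> words \<open>y \<noteq> x\<close> contribute most when they fill the Hamming spheres around \<open>x\<close> in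
  order of increasing radius, which is exactly how \<open>wstar\<close> and \<open>rr\<close> are defined.\<close>

lemma row_sum_le_eps:
  assumes S': "S' \<subseteq> {x. length x = n}" "card S' = q" "x \<in> S'" and f: "0 \<le> f" "f \<le> 1/2"
  shows "(\<Sum>y\<in>S'. ((1 + (1 - 2*f) ^ hamming_dist n x y) / 2)^m) \<le> 1 + eps n m q f * (real q - 1)"
proof -
  define G where "G w = ((1 + (1 - 2*f)^w) / 2)^m" for w
  define k where "k = wstar n q"
  define Y where "Y = S' - {x}"
  have finite_S': "finite S'"
    using S'(1) finite_subset finite_bool_lists_length by auto
  have card_Y: "card Y = q - 1" using S' finite_S' by (simp add: Y_def)
  have length_x: "length x = n" using S' by auto
  have Y_lists: "Y \<subseteq> {y. length y = n}" using S' by (auto simp: Y_def)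
  define c where "c w = real (card {y\<in>Y. hamming_dist n x y = w})" for w
  have "hamming_dist n x y \<in> {1..n}" if "y \<in> Y" for y
    using that Y_lists length_x hamming_dist_le[of n x y] hamming_dist_pos[of x n y] by (auto simp: Y_def)
  then have dist_range: "hamming_dist n x ` Y \<subseteq> {1..n}" by blast
  have sum_Y: "(\<Sum>y\<in>Y. G (hamming_dist n x y)) = (\<Sum>w=1..n. c w * G w)"
    using sum.group[OF _ _ dist_range, of "\<lambda>y. G (hamming_dist n x y)"] finite_S'
    by (simp add: Y_def c_def)
  have sum_c: "(\<Sum>w=1..n. c w) = real (q - 1)"
    using sum.group[OF _ _ dist_range, of "\<lambda>_. 1::real"] finite_S' card_Y
    by (simp add: Y_def c_def)
  have G_mono: "G w \<le> G v" if "v \<le> w" for v w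
  proof -
    have "(1 - 2*f)^w \<le> (1 - 2*f)^v" using f that by (intro power_decreasing) auto
    then show ?thesis unfolding G_def using f by (intro power_mono) auto
  qed
  have Y_bound: "(\<Sum>y\<in>Y. G (hamming_dist n x y)) \<le> eps n m q f * (real q - 1)"
  proof (cases "q = 1")
    case True
    then have "Y = {}" using card_Y finite_S' by (simp add: Y_def)
    then show ?thesis using True by simp
  next
    case False
    have "(\<Sum>y\<in>Y. G (hamming_dist n x y))
        \<le> (\<Sum>w=1..k. real (n choose w) * G w) + (real (q - 1) - (\<Sum>w=1..k. real (n choose w))) * G (k+1)"
      unfolding sum_Y sum_c[symmetric]
      by (rule weighted_sum_le_greedy)
         (auto simp: k_def wstar_le c_def G_mono card_hamming_sphere_le[OF Y_lists])
    also have "real (q - 1) - (\<Sum>w=1..k. real (n choose w)) = real (rr n q)"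
      using wstar_le(2)[of n q] by (simp add: rr_def k_def of_nat_diff flip: of_nat_sum)
    also have "(\<Sum>w=1..k. real (n choose w) * G w) + real (rr n q) * G (k+1) = eps n m q f * (real q - 1)"
      unfolding eps_times_eq[OF False]
      by (simp add: G_def k_def power_divide sum_divide_distrib)
    finally show ?thesis .
  qed
  have "(\<Sum>y\<in>S'. G (hamming_dist n x y)) = G (hamming_dist n x x) + (\<Sum>y\<in>Y. G (hamming_dist n x y))"
    unfolding Y_def using finite_S' S'(3) by (rule sum.remove)
  also have "G (hamming_dist n x x) = 1" by (simp add: G_def hamming_dist_def diff_positions_def)
  finally show ?thesis using Y_bound by (simp add: G_def)
qed

text \<open>The second moment method applied to \<open>S'(h) = \<Sum>\<^sub>x\<^sub>\<in>\<^sub>S\<^sub>' [h(x) = 0]\<close>, whose mean is \<open>q / 2^m\<close> and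
  whose second moment is at most \<open>q / 2^m (1 + \<epsilon> (q - 1))\<close> by pairwise analysis.\<close>

lemma prob_cell_nonempty_lower_bound:
  assumes S': "S' \<subseteq> {x. length x = n}" "card S' = q" "1 \<le> q" and f: "0 \<le> f" "f \<le> 1/2"
  shows "real q / 2^m
         \<le> (1 + eps n m q f * (real q - 1)) * measure_pmf.prob (hash_pmf m n f) {h. cell_count m n S' h \<noteq> 0}"
proof -
  let ?H = "hash_pmf m n f"
  let ?Z = "hashes_to_zero m n"
  define E where "E = eps n m q f * (real q - 1)"
  define P where "P = measure_pmf.prob ?H {h. cell_count m n S' h \<noteq> 0}"
  have finite_S': "finite S'"
    using S'(1) finite_subset finite_bool_lists_length by auto
  define X where "X h = (\<Sum>x\<in>S'. ?Z x h)" for h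
  have X_eq: "X h = real (cell_count m n S' h)" for h
    unfolding X_def hashes_to_zero_def cell_count_def using finite_S' by (simp add: Int_def)
  have Z_bounded: "\<bar>?Z x h\<bar> \<le> 1" for x h by (simp add: hashes_to_zero_def)
  have int_Z: "integrable (measure_pmf ?H) (?Z x)" for x
    by (rule measure_pmf.integrable_const_bound[where B=1]) (auto simp: Z_bounded)
  have int_ZZ: "integrable (measure_pmf ?H) (\<lambda>h. ?Z x h * ?Z y h)" for x y
    by (rule measure_pmf.integrable_const_bound[where B=1]) (auto simp: hashes_to_zero_def)
  have E_Z: "measure_pmf.expectation ?H (?Z x) = (1/2)^m" for x
  proof -
    have idem: "(\<lambda>h. ?Z x h * ?Z x h) = ?Z x" by (auto simp: hashes_to_zero_def fun_eq_iff)
    show ?thesis using expectation_hashes_to_zero_pair[of f m n x x] f unfolding idem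
      by (simp add: hamming_dist_def diff_positions_def)
  qed
  have E_X: "measure_pmf.expectation ?H X = real q * (1/2)^m"
    unfolding X_def using S'(2) by (simp add: Bochner_Integration.integral_sum int_Z E_Z)
  have "measure_pmf.expectation ?H (\<lambda>h. X h ^ 2)
      = (\<Sum>x\<in>S'. \<Sum>y\<in>S'. measure_pmf.expectation ?H (\<lambda>h. ?Z x h * ?Z y h))"
    unfolding X_def power2_eq_square sum_product
    by (simp add: Bochner_Integration.integral_sum int_ZZ Bochner_Integration.integrable_sum)
  also have "\<dots> = (\<Sum>x\<in>S'. (1/2)^m * (\<Sum>y\<in>S'. ((1 + (1 - 2*f) ^ hamming_dist n x y) / 2)^m))"
    using f by (simp add: expectation_hashes_to_zero_pair sum_distrib_left)
  also have "\<dots> \<le> (\<Sum>x\<in>S'. (1/2)^m * (1 + E))"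
    unfolding E_def by (intro sum_mono mult_left_mono row_sum_le_eps[OF S'(1,2) _ f]) auto
  also have "\<dots> = real q * (1/2)^m * (1 + E)" using S'(2) by simp
  finally have E_X2: "measure_pmf.expectation ?H (\<lambda>h. X h ^ 2) \<le> real q * (1/2)^m * (1 + E)" .
  have X_bounded: "\<bar>X h\<bar> \<le> real q" for h
  proof -
    have "\<bar>X h\<bar> \<le> (\<Sum>x\<in>S'. 1)" unfolding X_def
      by (intro order.trans[OF sum_abs] sum_mono) (simp add: hashes_to_zero_def)
    then show ?thesis using S'(2) by simp
  qed
  have "(measure_pmf.expectation ?H X)^2
      \<le> measure_pmf.expectation ?H (\<lambda>h. X h ^ 2) * measure_pmf.prob ?H {h. X h \<noteq> 0}"
    by (rule expectation_sq_le_prob_nonzero) (rule X_bounded)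
  then have "(real q * (1/2)^m)^2 \<le> measure_pmf.expectation ?H (\<lambda>h. X h ^ 2) * P"
    unfolding E_X by (simp add: X_eq P_def)
  also have "\<dots> \<le> real q * (1/2)^m * (1 + E) * P"
    by (intro mult_right_mono E_X2) (simp add: P_def)
  finally have "(real q * (1/2)^m) * (real q * (1/2)^m) \<le> (real q * (1/2)^m) * ((1 + E) * P)"
    by (simp add: power2_eq_square mult.assoc)
  moreover have "0 < real q * (1/2)^m" using S'(3) by simp
  ultimately have "real q * (1/2)^m \<le> (1 + E) * P" by (rule mult_left_le_imp_le)
  then show ?thesis by (simp add: E_def P_def power_one_over)
qed

lemma prob_cell_nonempty_ge_three_quarters:
  assumes S': "S' \<subseteq> {x. length x = n}" "card S' = u" and u: "u \<in> U_set n m f"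
    and f: "0 \<le> f" "f \<le> 1/2"
  shows "3/4 \<le> measure_pmf.prob (hash_pmf m n f) {h. cell_count m n S' h \<noteq> 0}"
proof -
  define E where "E = eps n m u f * (real u - 1)"
  define a where "a = real u / 2^m"
  define P where "P = measure_pmf.prob (hash_pmf m n f) {h. cell_count m n S' h \<noteq> 0}"
  have u_pos: "1 \<le> u" and U: "3/4 \<le> 1 / (1 + 2^(2*m) * vq n m f u / (real u)^2)"
    using u by (auto simp: U_set_def)
  have lower: "a \<le> (1 + E) * P"
    unfolding a_def E_def P_def by (rule prob_cell_nonempty_lower_bound[OF S' u_pos f])
  have "E \<ge> 0" unfolding E_def by (rule eps_times_nonneg[OF f])
  have "a > 0" using u_pos by (simp add: a_def)
  have "1 + 2^(2*m) * vq n m f u / (real u)^2 = (1 + E) / a"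
  proof -
    have "vq n m f u = a * (1 + E - a)" by (simp add: vq_def a_def E_def)
    moreover have "(2::real)^(2*m) = 2^m * 2^m" by (metis mult_2 power_add)
    moreover have "real u = a * 2^m" by (simp add: a_def)
    ultimately show ?thesis using \<open>a > 0\<close> by (simp add: power2_eq_square field_simps)
  qed
  then have "3/4 \<le> a / (1 + E)" using U by simp
  also have "a / (1 + E) \<le> P" using lower \<open>E \<ge> 0\<close> by (simp add: pos_divide_le_eq mult.commute)
  finally show ?thesis unfolding P_def .
qed

lemma prob_cell_empty_le_quarter:
  assumes S: "S \<subseteq> {x. length x = n}" and u: "u \<in> U_set n m f" "u \<le> card S"
    and f: "0 \<le> f" "f \<le> 1/2"
  shows "measure_pmf.prob (hash_pmf m n f) {h. cell_count m n S h = 0} \<le> 1/4"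
proof -
  obtain S' where S': "S' \<subseteq> S" "card S' = u"
    using obtain_subset_with_card_n[OF u(2)] by metis
  have finite_S: "finite S"
    using S finite_subset finite_bool_lists_length by auto
  have "{h. cell_count m n S h = 0} \<subseteq> {h. cell_count m n S' h = 0}"
    using S'(1) finite_S finite_subset[OF S'(1)] by (auto simp: cell_count_def)
  then have "measure_pmf.prob (hash_pmf m n f) {h. cell_count m n S h = 0}
      \<le> measure_pmf.prob (hash_pmf m n f) {h. cell_count m n S' h = 0}"
    by (rule measure_pmf.finite_measure_mono) simp
  also have "\<dots> = 1 - measure_pmf.prob (hash_pmf m n f) {h. cell_count m n S' h \<noteq> 0}"
    by (subst measure_pmf.prob_compl[symmetric]) (auto intro: arg_cong[where f="measure _"])
  also have "\<dots> \<le> 1/4"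
    using prob_cell_nonempty_ge_three_quarters[OF _ S'(2) u(1) f] S S'(1) by fastforce
  finally show ?thesis .
qed

lemma U_eq_enat_imp_mem:
  assumes "U n m f = enat u"
  shows "u \<in> U_set n m f"
proof -
  have "finite (U_set n m f)" by (rule finite_subset[of _ "{1..2^n}"]) (auto simp: U_set_def)
  then show ?thesis using assms Min_in by (auto simp: U_def split: if_splits)
qed

theorem theorem4:
  fixes S :: "bool list set" and n m T :: nat and f \<Delta> :: real
  assumes "S \<subseteq> {x. length x = n}"
    and "1 \<le> m" and "m \<le> n"
    and "0 \<le> f" and "f \<le> 1/2"
    and "0 < \<Delta>" and "\<Delta> < 1"
    and "real T \<ge> 24 * ln (1/\<Delta>)"
  shows "measure_pmf.prob (Pi_pmf {..<T} (\<lambda>_. False, \<lambda>_. False) (\<lambda>_. hash_pmf m n f))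
           {hs. enat (card S) \<le> alg n m f T S hs} \<ge> 1 - \<Delta>"
proof -
  note S = assms(1) and f = assms(4,5) and \<Delta> = assms(6,7) and T = assms(8)
  let ?P = "Pi_pmf {..<T} (\<lambda>_. False, \<lambda>_. False) (\<lambda>_. hash_pmf m n f)"
  let ?median = "{hs. median_is_one T (\<lambda>t. cell_count m n S (hs t) = 0)}"
  have card_S: "card S \<le> 2^n"
    using card_mono[OF finite_bool_lists_length S] by (simp add: card_bool_lists_length)
  show ?thesis
  proof (cases "enat (card S) \<le> U n m f")
    case True
    then have "{hs. enat (card S) \<le> alg n m f T S hs} = UNIV" using card_S by (auto simp: alg_def)
    then show ?thesis using \<Delta> by simp
  next
    case False
    then obtain u where "U n m f = enat u" "u < card S" by (cases "U n m f") auto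
    then have "measure_pmf.prob (hash_pmf m n f) {h. cell_count m n S h = 0} \<le> 1/4"
      by (intro prob_cell_empty_le_quarter[OF S _ _ f] U_eq_enat_imp_mem) auto
    then have "measure_pmf.prob ?P ?median \<le> \<Delta>" by (rule prob_median_is_one_le[OF _ \<Delta> T])
    moreover have "UNIV - ?median \<subseteq> {hs. enat (card S) \<le> alg n m f T S hs}"
      using card_S by (auto simp: alg_def)
    then have "measure_pmf.prob ?P (UNIV - ?median) \<le> measure_pmf.prob ?P {hs. enat (card S) \<le> alg n m f T S hs}"
      by (rule measure_pmf.finite_measure_mono) simp
    moreover have "measure_pmf.prob ?P (UNIV - ?median) = 1 - measure_pmf.prob ?P ?median"
      using measure_pmf.prob_compl[of ?median ?P] by simp
    ultimately show ?thesis by linarith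
  qed
qed

end
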